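(* Let $X$ and $Y$ be Hausdorff topological spaces with no isolated points. Then every topological arc contained in the product space $X\times Y$ has empty interior in $X\times Y$.
   Context: A topological arc is a subset of a topological space that is homeomorphic to $\mathbb{R}$. *)

theory Defs
  imports "HOL-Analysis.Analysis"
begin

end

theory Submission
  imports Defs
begin

text \<open>If the interior of the arc contained a point, it would contain an open box around it.
  Being open in a space homeomorphic to \<open>\<real>\<close>, the box is locally connected, and so are its factors;
  hence the box contains a product \<open>C \<times> D\<close> of open connected sets, each with at least two points
  since \<open>X\<close> and \<open>Y\<close> have no isolated points. Such a product stays connected after removing a point,
  whereas no open subset of \<open>\<real>\<close> does.\<close>

lemma connectedin_Times_minus_point:
  assumes U: "connectedin X U" and V: "connectedin Y V"
    and "a \<in> U" "a' \<in> U" "a' \<noteq> a" and "b \<in> V" "b' \<in> V" "b' \<noteq> b"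
  shows "connectedin (prod_topology X Y) (U \<times> V - {(a,b)})"
proof -
  have U1: "connectedin X {x}" if "x \<in> U" for x
    using U that by (meson connectedin_sing connectedin_subset_topspace subsetD)
  have V1: "connectedin Y {y}" if "y \<in> V" for y
    using V that by (meson connectedin_sing connectedin_subset_topspace subsetD)
  \<comment> \<open>Every point other than \<open>(a,b)\<close> lies on a horizontal or vertical fibre avoiding \<open>(a,b)\<close>,
      and all these fibres meet the cross through \<open>(a',b')\<close>.\<close>
  define M where "M = U \<times> {b'} \<union> {a'} \<times> V"
  define F where "F = {M \<union> {x} \<times> V | x. x \<in> U \<and> x \<noteq> a} \<union> {M \<union> U \<times> {y} | y. y \<in> V \<and> y \<noteq> b}"
  have "connectedin (prod_topology X Y) M"
    unfolding M_def using assms U1 V1 by (intro connectedin_Un) (auto simp: connectedin_Times)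
  then have "connectedin (prod_topology X Y) S" if "S \<in> F" for S
    using that assms U1 V1 unfolding F_def
    by (auto intro!: connectedin_Un simp: connectedin_Times M_def)
  moreover have "(a',b') \<in> \<Inter>F"
    unfolding F_def M_def using assms by auto
  ultimately have "connectedin (prod_topology X Y) (\<Union>F)"
    by (intro connectedin_Union) auto
  moreover have "\<Union>F = U \<times> V - {(a,b)}"
    unfolding F_def M_def using assms by auto
  ultimately show ?thesis by simp
qed

lemma locally_connected_obtain_open_connected_nontrivial:
  assumes lc: "locally_connected_space (subtopology X U)" and U: "openin X U" and "a \<in> U"
    and no_isolated: "\<And>x. x \<in> topspace X \<Longrightarrow> \<not> openin X {x}"
  obtains C a' where "openin X C" "connectedin X C" "C \<subseteq> U" "a \<in> C" "a' \<in> C" "a' \<noteq> a"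
proof -
  define C where "C = connected_component_of_set (subtopology X U) a"
  have aX: "a \<in> topspace X"
    using \<open>a \<in> U\<close> openin_subset[OF U] by blast
  have "openin (subtopology X U) C"
    unfolding C_def by (rule openin_connected_component_of_locally_connected_space[OF lc])
  then have C_open: "openin X C"
    using U openin_trans_full by blast
  have "connectedin (subtopology X U) C"
    unfolding C_def by (rule connectedin_connected_component_of)
  then have C_connected: "connectedin X C" and "C \<subseteq> U"
    by (simp_all add: connectedin_subtopology)
  have "a \<in> C"
    unfolding C_def using \<open>a \<in> U\<close> aX by (simp add: connected_component_of_refl)
  moreover have "C \<noteq> {a}"
    using C_open no_isolated aX by blast
  ultimately obtain a' where "a' \<in> C" "a' \<noteq> a" by blast
  with C_open C_connected \<open>C \<subseteq> U\<close> \<open>a \<in> C\<close> show thesis by (rule that)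
qed

lemma locally_connected_space_factors_of_open_box:
  assumes lc: "locally_connected_space (subtopology (prod_topology X Y) S)"
    and "openin X U" "openin Y V" "a \<in> U" "b \<in> V" "U \<times> V \<subseteq> S"
  shows "locally_connected_space (subtopology X U)" "locally_connected_space (subtopology Y V)"
proof -
  have "openin (subtopology (prod_topology X Y) S) (U \<times> V)"
    using assms openin_subtopology_Int2[of "prod_topology X Y" "U \<times> V" S]
    by (simp add: openin_prod_Times_iff Int_absorb1)
  then have "locally_connected_space (subtopology (subtopology (prod_topology X Y) S) (U \<times> V))"
    by (rule locally_connected_space_open_subset[OF lc])
  then have "locally_connected_space (prod_topology (subtopology X U) (subtopology Y V))"
    using \<open>U \<times> V \<subseteq> S\<close> by (simp add: subtopology_subtopology subtopology_Times Int_absorb1)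
  moreover have "(a,b) \<in> topspace (prod_topology (subtopology X U) (subtopology Y V))"
    using assms openin_subset[of X U] openin_subset[of Y V] by auto
  then have "prod_topology (subtopology X U) (subtopology Y V) \<noteq> trivial_topology"
    by force
  ultimately show "locally_connected_space (subtopology X U)" "locally_connected_space (subtopology Y V)"
    by (simp_all add: locally_connected_space_prod_topology)
qed

lemma open_real_minus_point_not_connected:
  fixes S :: "real set"
  assumes "open S" "t \<in> S"
  shows "\<not> connected (S - {t})"
proof
  assume "connected (S - {t})"
  obtain e where "e > 0" "ball t e \<subseteq> S"
    using assms open_contains_ball by blast
  then have "t - e/2 \<in> S - {t}" "t + e/2 \<in> S - {t}"
    by (auto simp: dist_real_def)
  with \<open>connected (S - {t})\<close> have "t \<in> S - {t}"
    unfolding connected_iff_interval using \<open>e > 0\<close> by (smt (verit))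
  then show False by simp
qed

lemma homeomorphic_real_not_connectedin_open_minus_point:
  assumes "X homeomorphic_space euclideanreal" "openin X K" "p \<in> K"
  shows "\<not> connectedin X (K - {p})"
proof
  assume "connectedin X (K - {p})"
  obtain h where h: "homeomorphic_map X euclideanreal h"
    using assms(1) homeomorphic_space by blast
  have K: "K \<subseteq> topspace X"
    using assms(2) openin_subset by blast
  have "open (h ` K)"
    using homeomorphic_map_openness[OF h K] assms(2) by simp
  moreover have "h ` (K - {p}) = h ` K - {h p}"
    using homeomorphic_imp_injective_map[OF h] K \<open>p \<in> K\<close> by (auto simp: inj_on_def)
  moreover have "connected (h ` (K - {p}))"
    using connectedin_continuous_map_image[OF homeomorphic_imp_continuous_map[OF h]]
      \<open>connectedin X (K - {p})\<close> by simp
  ultimately show False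
    using open_real_minus_point_not_connected \<open>p \<in> K\<close> by auto
qed

theorem lemma3p5:
  fixes X :: "'a topology" and Y :: "'b topology" and A :: "('a \<times> 'b) set"
  assumes "Hausdorff_space X" and "Hausdorff_space Y"
    and nX: "\<And>x. x \<in> topspace X \<Longrightarrow> \<not> openin X {x}"
    and nY: "\<And>y. y \<in> topspace Y \<Longrightarrow> \<not> openin Y {y}"
    and "A \<subseteq> topspace (prod_topology X Y)"
    and hom: "subtopology (prod_topology X Y) A homeomorphic_space euclideanreal"
  shows "(prod_topology X Y) interior_of A = {}"
proof (rule ccontr)
  let ?P = "prod_topology X Y"
  assume "?P interior_of A \<noteq> {}"
  then obtain a b where "(a,b) \<in> ?P interior_of A"
    by auto
  then obtain U V where UV: "openin X U" "openin Y V" "a \<in> U" "b \<in> V" "U \<times> V \<subseteq> A"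
    using openin_prod_topology_alt[of X Y "?P interior_of A"] interior_of_subset[of ?P A]
    by (metis openin_interior_of subset_trans)
  have "locally_connected_space (subtopology ?P A)"
    using hom homeomorphic_locally_connected_space locally_connected_space_euclideanreal by blast
  note lc = locally_connected_space_factors_of_open_box[OF this UV]
  obtain C a' where C: "openin X C" "connectedin X C" "C \<subseteq> U" "a \<in> C" "a' \<in> C" "a' \<noteq> a"
    using locally_connected_obtain_open_connected_nontrivial[OF lc(1) UV(1,3) nX] .
  obtain D b' where D: "openin Y D" "connectedin Y D" "D \<subseteq> V" "b \<in> D" "b' \<in> D" "b' \<noteq> b"
    using locally_connected_obtain_open_connected_nontrivial[OF lc(2) UV(2,4) nY] .
  have "C \<times> D \<subseteq> A"
    using C D UV by blast
  then have "openin (subtopology ?P A) (C \<times> D)"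
    using C D by (metis inf.absorb_iff2 openin_prod_Times_iff openin_subtopology_Int2)
  moreover have "connectedin (subtopology ?P A) (C \<times> D - {(a,b)})"
    using connectedin_Times_minus_point[OF C(2) D(2) C(4-6) D(4-6)] \<open>C \<times> D \<subseteq> A\<close>
    by (auto simp: connectedin_subtopology)
  ultimately show False
    using homeomorphic_real_not_connectedin_open_minus_point[OF hom] C D by blast
qed

end
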